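(* In a monotonous quiver, a phylogenetic vertex $X$ has exactly $h(X)$ isotypy classes of critical ancestors.
   Context: A quiver consists of a class of vertices and, for each ordered pair of vertices $(A,B)$, a set of edges $A\to B$ (loops and multiple edges allowed). An evolution of length $m\ge 0$ is a sequence $A_0\leftarrow A_1\leftarrow\cdots\leftarrow A_m$ of vertices together with edges $A_k\to A_{k-1}$ ($1\le k\le m$); $A_0$ is its initial and $A_m$ its terminal vertex. Write $A\le B$ ($A$ is an ancestor of $B$) if there is an evolution with initial vertex $A$ and terminal vertex $B$; $A,B$ are isotypic ($A\sim B$) if $A\le B$ and $B\le A$. A vertex $A$ is primitive if every ancestor of $A$ is isotypic to $A$. A full evolution for $X$ is an evolution with primitive initial vertex and terminal vertex $X$. The height $h(X)$ is the smallest length of a full evolution for $X$ ($\infty$ if none). A vertex $A_k$ ($0\le k<m$) of an evolution $A_0\leftarrow\cdots\leftarrow A_m$ is critical if $h(A_k)<\infty$ and $h(A_{k+1})=h(A_k)+1$. The critical ancestors of a vertex $B$ are the critical vertices of full evolutions terminating at $B$. An evolution $\alpha=(A_0\leftarrow\cdots\leftarrow A_m)$ embeds in $\beta=(B_0\leftarrow\cdots\leftarrow B_n)$ if $m\le n$ and there are $0\le r_0<\cdots<r_m\le n$ with $A_k\sim B_{r_k}$. A universal evolution for $X$ is a full evolution for $X$ embedding in every full evolution for $X$; $X$ is phylogenetic if one exists. A quiver is monotonous if $h(A)\ge h(B)$ for every edge $A\to B$. *)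

theory Defs
  imports Main "HOL-Library.Extended_Nat"
begin

text \<open>An evolution A_0 <- A_1 <- ... <- A_m is a nonempty vertex list As
  (As!k = A_k, m = length As - 1) together with an edge list es of length m,
  where es!(k-1) is an edge A_k -> A_(k-1).\<close>

definition evolution :: "('e \<Rightarrow> 'v) \<Rightarrow> ('e \<Rightarrow> 'v) \<Rightarrow> 'v list \<Rightarrow> 'e list \<Rightarrow> bool" where
  "evolution src tgt As es \<longleftrightarrow> As \<noteq> [] \<and> length es = length As - 1 \<and>
     (\<forall>k. 1 \<le> k \<and> k < length As \<longrightarrow>
        src (es ! (k - 1)) = As ! k \<and> tgt (es ! (k - 1)) = As ! (k - 1))"

definition evol :: "('e \<Rightarrow> 'v) \<Rightarrow> ('e \<Rightarrow> 'v) \<Rightarrow> 'v list \<Rightarrow> bool" where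
  "evol src tgt As \<longleftrightarrow> (\<exists>es. evolution src tgt As es)"

definition ancestor :: "('e \<Rightarrow> 'v) \<Rightarrow> ('e \<Rightarrow> 'v) \<Rightarrow> 'v \<Rightarrow> 'v \<Rightarrow> bool" where
  "ancestor src tgt A B \<longleftrightarrow> (\<exists>As. evol src tgt As \<and> hd As = A \<and> last As = B)"

definition isotypic :: "('e \<Rightarrow> 'v) \<Rightarrow> ('e \<Rightarrow> 'v) \<Rightarrow> 'v \<Rightarrow> 'v \<Rightarrow> bool" where
  "isotypic src tgt A B \<longleftrightarrow> ancestor src tgt A B \<and> ancestor src tgt B A"

definition primitive :: "('e \<Rightarrow> 'v) \<Rightarrow> ('e \<Rightarrow> 'v) \<Rightarrow> 'v \<Rightarrow> bool" where
  "primitive src tgt A \<longleftrightarrow> (\<forall>B. ancestor src tgt B A \<longrightarrow> isotypic src tgt B A)"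

definition full_evol :: "('e \<Rightarrow> 'v) \<Rightarrow> ('e \<Rightarrow> 'v) \<Rightarrow> 'v list \<Rightarrow> 'v \<Rightarrow> bool" where
  "full_evol src tgt As X \<longleftrightarrow> evol src tgt As \<and> primitive src tgt (hd As) \<and> last As = X"

text \<open>Height: least length of a full evolution; infinity (top of enat) if none.\<close>
definition height :: "('e \<Rightarrow> 'v) \<Rightarrow> ('e \<Rightarrow> 'v) \<Rightarrow> 'v \<Rightarrow> enat" where
  "height src tgt X = (INF As \<in> {As. full_evol src tgt As X}. enat (length As - 1))"

definition critical :: "('e \<Rightarrow> 'v) \<Rightarrow> ('e \<Rightarrow> 'v) \<Rightarrow> 'v list \<Rightarrow> nat \<Rightarrow> bool" where
  "critical src tgt As k \<longleftrightarrow> k < length As - 1 \<and> height src tgt (As ! k) < \<infinity> \<and>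
     height src tgt (As ! Suc k) = height src tgt (As ! k) + 1"

definition critical_ancestors :: "('e \<Rightarrow> 'v) \<Rightarrow> ('e \<Rightarrow> 'v) \<Rightarrow> 'v \<Rightarrow> 'v set" where
  "critical_ancestors src tgt B =
     {As ! k | As k. full_evol src tgt As B \<and> critical src tgt As k}"

definition embeds :: "('e \<Rightarrow> 'v) \<Rightarrow> ('e \<Rightarrow> 'v) \<Rightarrow> 'v list \<Rightarrow> 'v list \<Rightarrow> bool" where
  "embeds src tgt \<alpha> \<beta> \<longleftrightarrow> length \<alpha> \<le> length \<beta> \<and>
     (\<exists>r. strict_mono_on {..<length \<alpha>} r \<and>
        (\<forall>k < length \<alpha>. r k < length \<beta> \<and> isotypic src tgt (\<alpha> ! k) (\<beta> ! r k)))"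

definition universal_evol :: "('e \<Rightarrow> 'v) \<Rightarrow> ('e \<Rightarrow> 'v) \<Rightarrow> 'v list \<Rightarrow> 'v \<Rightarrow> bool" where
  "universal_evol src tgt As X \<longleftrightarrow> full_evol src tgt As X \<and>
     (\<forall>Bs. full_evol src tgt Bs X \<longrightarrow> embeds src tgt As Bs)"

definition phylogenetic :: "('e \<Rightarrow> 'v) \<Rightarrow> ('e \<Rightarrow> 'v) \<Rightarrow> 'v \<Rightarrow> bool" where
  "phylogenetic src tgt X \<longleftrightarrow> (\<exists>As. universal_evol src tgt As X)"

definition monotonous :: "('e \<Rightarrow> 'v) \<Rightarrow> ('e \<Rightarrow> 'v) \<Rightarrow> bool" where
  "monotonous src tgt \<longleftrightarrow> (\<forall>e. height src tgt (src e) \<ge> height src tgt (tgt e))"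

definition isotypy_class :: "('e \<Rightarrow> 'v) \<Rightarrow> ('e \<Rightarrow> 'v) \<Rightarrow> 'v \<Rightarrow> 'v set" where
  "isotypy_class src tgt A = {B. isotypic src tgt A B}"

end

theory Submission
  imports Defs
begin

text \<open>In a monotonous quiver heights are non-decreasing along evolutions, and in any quiver an
  edge raises the height by at most one. Hence a full evolution for \<open>X\<close> passes through a critical
  step from height \<open>j\<close> to \<open>j + 1\<close> for every \<open>j < h(X)\<close>, and all critical ancestors have height
  below \<open>h(X)\<close>. Conversely, two critical ancestors of the same height \<open>j\<close> are isotypic:
  prefixing the tail of a full evolution after a critical vertex \<open>A\<close> of height \<open>j\<close> with a
  shortest full evolution for \<open>A\<close> yields a full evolution whose only vertex of height \<open>j\<close>
  is \<open>A\<close>, at position \<open>j\<close>, so the universal evolution must map its vertex of height \<open>j\<close>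
  there. Thus the height map identifies the isotypy classes of critical ancestors with
  \<open>{0, \<dots>, h(X) - 1}\<close>.\<close>

lemma bij_betw_images_same_kernel:
  assumes "\<And>x y. x \<in> S \<Longrightarrow> y \<in> S \<Longrightarrow> f x = f y \<longleftrightarrow> g x = g y"
  shows "bij_betw (\<lambda>a. g (inv_into S f a)) (f ` S) (g ` S)"
proof (rule bij_betwI')
  fix a b assume "a \<in> f ` S" "b \<in> f ` S"
  then show "g (inv_into S f a) = g (inv_into S f b) \<longleftrightarrow> a = b"
    using assms by (metis f_inv_into_f inv_into_into)
next
  fix a assume "a \<in> f ` S"
  then show "g (inv_into S f a) \<in> g ` S" by (simp add: inv_into_into)
next
  fix c assume "c \<in> g ` S"
  then obtain x where "x \<in> S" "c = g x" by blast
  then show "\<exists>a \<in> f ` S. c = g (inv_into S f a)"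
    using assms by (metis f_inv_into_f image_eqI inv_into_into)
qed

lemma enat_unit_step_crossing:
  fixes f :: "nat \<Rightarrow> enat"
  assumes "\<And>i. i < m \<Longrightarrow> f (Suc i) \<le> f i + 1" and "f 0 \<le> enat j" and "enat j < f m"
  shows "\<exists>k<m. f k = enat j \<and> f (Suc k) = enat (Suc j)"
  using assms
proof (induction m)
  case (Suc m)
  show ?case
  proof (cases "enat j < f m")
    case True
    with Suc show ?thesis by (metis less_SucI)
  next
    case False
    then obtain a where a: "f m = enat a" "a \<le> j" by (cases "f m") auto
    have "enat j < f (Suc m)" "f (Suc m) \<le> enat a + 1"
      using Suc.prems(3) Suc.prems(1)[of m] a(1) by simp_all
    then have "f m = enat j \<and> f (Suc m) = enat (Suc j)"
      using a by (cases "f (Suc m)") (auto simp: one_enat_def)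
    then show ?thesis by blast
  qed
qed simp

lemma evol_iff:
  "evol src tgt As \<longleftrightarrow> As \<noteq> [] \<and>
     (\<forall>k. Suc k < length As \<longrightarrow> (\<exists>e. src e = As ! Suc k \<and> tgt e = As ! k))"
proof
  assume "evol src tgt As"
  then obtain es where es: "evolution src tgt As es" by (auto simp: evol_def)
  show "As \<noteq> [] \<and> (\<forall>k. Suc k < length As \<longrightarrow> (\<exists>e. src e = As ! Suc k \<and> tgt e = As ! k))"
  proof (intro conjI allI impI)
    show "As \<noteq> []" using es by (simp add: evolution_def)
    fix k assume "Suc k < length As"
    then have "src (es ! k) = As ! Suc k \<and> tgt (es ! k) = As ! k"
      using es unfolding evolution_def by (metis Suc_le_mono diff_Suc_1 le0 One_nat_def)
    then show "\<exists>e. src e = As ! Suc k \<and> tgt e = As ! k" by blast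
  qed
next
  assume edges: "As \<noteq> [] \<and> (\<forall>k. Suc k < length As \<longrightarrow> (\<exists>e. src e = As ! Suc k \<and> tgt e = As ! k))"
  define es where "es = map (\<lambda>k. SOME e. src e = As ! Suc k \<and> tgt e = As ! k) [0..<length As - 1]"
  have "evolution src tgt As es"
    unfolding evolution_def
  proof (intro conjI allI impI)
    show "As \<noteq> []" "length es = length As - 1" using edges by (simp_all add: es_def)
    fix k assume "1 \<le> k \<and> k < length As"
    then obtain i where i: "k = Suc i" "Suc i < length As" by (cases k) auto
    have edge: "\<exists>e. src e = As ! Suc i \<and> tgt e = As ! i" using edges i by blast
    have "src (es ! i) = As ! Suc i \<and> tgt (es ! i) = As ! i"
      using i someI_ex[OF edge] unfolding es_def by simp
    then show "src (es ! (k - 1)) = As ! k" "tgt (es ! (k - 1)) = As ! (k - 1)" using i by auto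
  qed
  then show "evol src tgt As" by (auto simp: evol_def)
qed

lemma evol_nonempty: "evol src tgt As \<Longrightarrow> As \<noteq> []"
  by (simp add: evol_iff)

lemma evol_edge:
  "evol src tgt As \<Longrightarrow> Suc k < length As \<Longrightarrow> \<exists>e. src e = As ! Suc k \<and> tgt e = As ! k"
  by (simp add: evol_iff)

lemma evol_singleton: "evol src tgt [A]"
  by (simp add: evol_iff)

lemma evol_take: "evol src tgt As \<Longrightarrow> 0 < m \<Longrightarrow> evol src tgt (take m As)"
  by (auto simp: evol_iff)

lemma evol_drop: "evol src tgt As \<Longrightarrow> i < length As \<Longrightarrow> evol src tgt (drop i As)"
  by (auto simp: evol_iff)

lemma last_append_tl:
  "As \<noteq> [] \<Longrightarrow> Bs \<noteq> [] \<Longrightarrow> last As = hd Bs \<Longrightarrow> last (As @ tl Bs) = last Bs"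
  by (cases Bs) auto

lemma evol_append:
  assumes A: "evol src tgt As" and B: "evol src tgt Bs" and glue: "last As = hd Bs"
  shows "evol src tgt (As @ tl Bs)"
  unfolding evol_iff
proof (intro conjI allI impI)
  have "As \<noteq> []" "Bs \<noteq> []" using A B by (simp_all add: evol_nonempty)
  have tail: "(As @ tl Bs) ! i = Bs ! (i - (length As - 1))" if "length As - 1 \<le> i" for i
  proof (cases "i < length As")
    case True
    then have "i = length As - 1" using that by simp
    then show ?thesis
      using \<open>As \<noteq> []\<close> \<open>Bs \<noteq> []\<close> glue by (simp add: nth_append last_conv_nth hd_conv_nth)
  next
    case False
    then have "(As @ tl Bs) ! i = tl Bs ! (i - length As)" by (simp add: nth_append)
    also have "\<dots> = Bs ! Suc (i - length As)" using \<open>Bs \<noteq> []\<close> by (cases Bs) auto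
    also have "Suc (i - length As) = i - (length As - 1)" using False \<open>As \<noteq> []\<close> by (cases As) auto
    finally show ?thesis .
  qed
  show "As @ tl Bs \<noteq> []" using \<open>As \<noteq> []\<close> by simp
  fix k assume k: "Suc k < length (As @ tl Bs)"
  show "\<exists>e. src e = (As @ tl Bs) ! Suc k \<and> tgt e = (As @ tl Bs) ! k"
  proof (cases "Suc k < length As")
    case True
    then show ?thesis using evol_edge[OF A True] by (simp add: nth_append)
  next
    case False
    then have "Suc (k - (length As - 1)) < length Bs"
      "Suc k - (length As - 1) = Suc (k - (length As - 1))"
      using k \<open>As \<noteq> []\<close> \<open>Bs \<noteq> []\<close> by auto
    then show ?thesis using evol_edge[OF B] False by (auto simp: tail)
  qed
qed

lemma ancestor_refl: "ancestor src tgt A A"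
  unfolding ancestor_def using evol_singleton by fastforce

lemma ancestor_trans:
  assumes "ancestor src tgt A B" and "ancestor src tgt B C"
  shows "ancestor src tgt A C"
proof -
  obtain As Bs where As: "evol src tgt As" "hd As = A" "last As = B"
    and Bs: "evol src tgt Bs" "hd Bs = B" "last Bs = C"
    using assms unfolding ancestor_def by blast
  have "evol src tgt (As @ tl Bs)" using As Bs by (intro evol_append) auto
  moreover have "hd (As @ tl Bs) = A" using As evol_nonempty by fastforce
  moreover have "last (As @ tl Bs) = C"
    using As Bs by (simp add: last_append_tl evol_nonempty)
  ultimately show ?thesis unfolding ancestor_def by blast
qed

lemma isotypic_refl: "isotypic src tgt A A"
  by (simp add: isotypic_def ancestor_refl)

lemma isotypic_sym: "isotypic src tgt A B \<Longrightarrow> isotypic src tgt B A"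
  by (simp add: isotypic_def)

lemma isotypic_trans: "isotypic src tgt A B \<Longrightarrow> isotypic src tgt B C \<Longrightarrow> isotypic src tgt A C"
  unfolding isotypic_def using ancestor_trans by metis

lemma isotypy_class_eq_iff: "isotypy_class src tgt A = isotypy_class src tgt B \<longleftrightarrow> isotypic src tgt A B"
proof
  assume "isotypy_class src tgt A = isotypy_class src tgt B"
  then show "isotypic src tgt A B" using isotypic_refl[of src tgt B] by (auto simp: isotypy_class_def)
next
  assume "isotypic src tgt A B"
  then show "isotypy_class src tgt A = isotypy_class src tgt B"
    unfolding isotypy_class_def by (blast intro: isotypic_sym isotypic_trans)
qed

lemma height_le_length: "full_evol src tgt As X \<Longrightarrow> height src tgt X \<le> enat (length As - 1)"
  unfolding height_def by (rule INF_lower) simp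

lemma full_evol_of_height:
  assumes "height src tgt X = enat n"
  obtains As where "full_evol src tgt As X" and "length As = Suc n"
proof -
  let ?S = "(\<lambda>As. enat (length As - 1)) ` {As. full_evol src tgt As X}"
  have "?S \<noteq> {}"
  proof
    assume "?S = {}"
    then have "height src tgt X = \<infinity>" unfolding height_def by (simp add: top_enat_def)
    with assms show False by simp
  qed
  then have "(LEAST x. x \<in> ?S) \<in> ?S" by (meson LeastI_ex ex_in_conv)
  then have "height src tgt X \<in> ?S"
    unfolding height_def Inf_enat_def using \<open>?S \<noteq> {}\<close> by simp
  then obtain As where "full_evol src tgt As X" "enat n = enat (length As - 1)" using assms by auto
  moreover have "As \<noteq> []" using \<open>full_evol src tgt As X\<close> by (auto simp: full_evol_def dest: evol_nonempty)
  ultimately show thesis using that by (cases As) auto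
qed

lemma height_primitive: "primitive src tgt A \<Longrightarrow> height src tgt A = 0"
  using height_le_length[of src tgt "[A]" A] by (simp add: full_evol_def evol_singleton flip: zero_enat_def)

lemma height_edge_le:
  assumes "src e = B" and "tgt e = A"
  shows "height src tgt B \<le> height src tgt A + 1"
proof (cases "height src tgt A")
  case (enat n)
  then obtain As where As: "full_evol src tgt As A" "length As = Suc n"
    by (rule full_evol_of_height)
  have "evol src tgt (As @ tl [A, B])"
    using As assms by (intro evol_append) (auto simp: full_evol_def evol_iff)
  then have "full_evol src tgt (As @ [B]) B" using As by (cases As) (auto simp: full_evol_def)
  then have "height src tgt B \<le> enat (Suc n)" using height_le_length As(2) by fastforce
  then show ?thesis using enat by (simp add: one_enat_def)
qed simp

lemma height_nth_le:
  assumes "full_evol src tgt As X" and "i < length As"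
  shows "height src tgt (As ! i) \<le> enat i"
proof -
  have "hd (take (Suc i) As) = hd As" by (cases As) simp_all
  moreover have "last (take (Suc i) As) = As ! i" using assms(2) by (simp add: take_Suc_conv_app_nth)
  ultimately have "full_evol src tgt (take (Suc i) As) (As ! i)"
    using assms(1) by (simp add: full_evol_def evol_take)
  then show ?thesis using height_le_length assms(2) by fastforce
qed

lemma evol_height_mono:
  assumes "monotonous src tgt" and "evol src tgt As" and "i \<le> j" and "j < length As"
  shows "height src tgt (As ! i) \<le> height src tgt (As ! j)"
  using assms(3,4)
proof (induction j rule: dec_induct)
  case (step j)
  obtain e where "src e = As ! Suc j" "tgt e = As ! j" using evol_edge[OF assms(2)] step by blast
  then have "height src tgt (As ! j) \<le> height src tgt (As ! Suc j)"
    using assms(1) unfolding monotonous_def by metis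
  with step show ?case by simp
qed simp

lemma ancestor_height_le:
  assumes "monotonous src tgt" and "ancestor src tgt A B"
  shows "height src tgt A \<le> height src tgt B"
proof -
  obtain As where As: "evol src tgt As" "hd As = A" "last As = B"
    using assms(2) unfolding ancestor_def by blast
  from As(1) have "As \<noteq> []" by (rule evol_nonempty)
  then show ?thesis
    using evol_height_mono[OF assms(1) As(1), of 0 "length As - 1"] As
    by (simp add: hd_conv_nth last_conv_nth)
qed

lemma isotypic_height_eq:
  "monotonous src tgt \<Longrightarrow> isotypic src tgt A B \<Longrightarrow> height src tgt A = height src tgt B"
  unfolding isotypic_def by (metis ancestor_height_le order_antisym)

lemma evol_height_crossing:
  assumes "evol src tgt As" and "height src tgt (hd As) \<le> enat j" and "enat j < height src tgt (last As)"
  obtains k where "Suc k < length As" and "height src tgt (As ! k) = enat j"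
    and "height src tgt (As ! Suc k) = enat (Suc j)"
proof -
  have "As \<noteq> []" using assms(1) by (rule evol_nonempty)
  have "\<exists>k<length As - 1. height src tgt (As ! k) = enat j \<and> height src tgt (As ! Suc k) = enat (Suc j)"
  proof (rule enat_unit_step_crossing)
    show "height src tgt (As ! Suc i) \<le> height src tgt (As ! i) + 1" if i: "i < length As - 1" for i
    proof -
      have "Suc i < length As" using i by linarith
      then obtain e where "src e = As ! Suc i" "tgt e = As ! i" using evol_edge[OF assms(1)] by blast
      then show ?thesis by (rule height_edge_le)
    qed
    show "height src tgt (As ! 0) \<le> enat j"
      using assms(2) \<open>As \<noteq> []\<close> by (simp add: hd_conv_nth)
    show "enat j < height src tgt (As ! (length As - 1))"
      using assms(3) \<open>As \<noteq> []\<close> by (simp add: last_conv_nth)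
  qed
  then show thesis using that by (auto simp: less_diff_conv)
qed

lemma full_evol_height_crossing:
  assumes "full_evol src tgt As X" and "height src tgt X = enat n" and "j < n"
  obtains k where "Suc k < length As" and "height src tgt (As ! k) = enat j"
    and "height src tgt (As ! Suc k) = enat (Suc j)"
proof (rule evol_height_crossing)
  show "evol src tgt As" using assms(1) by (simp add: full_evol_def)
  have "height src tgt (hd As) = 0"
    using assms(1) by (intro height_primitive) (simp add: full_evol_def)
  then show "height src tgt (hd As) \<le> enat j" by (simp add: zero_enat_def)
  show "enat j < height src tgt (last As)" using assms by (simp add: full_evol_def)
qed (use that in blast)

lemma critical_ancestorsE:
  assumes "B \<in> critical_ancestors src tgt X"
  obtains As k j where "full_evol src tgt As X" and "Suc k < length As" and "B = As ! k"
    and "height src tgt (As ! k) = enat j" and "height src tgt (As ! Suc k) = enat (Suc j)"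
proof -
  obtain As k where As: "full_evol src tgt As X" "critical src tgt As k" "B = As ! k"
    using assms unfolding critical_ancestors_def by blast
  then obtain j where "height src tgt (As ! k) = enat j" by (auto simp: critical_def)
  with As show thesis using that by (auto simp: critical_def one_enat_def less_diff_conv)
qed

lemma critical_ancestor_height_less:
  assumes "monotonous src tgt" and "B \<in> critical_ancestors src tgt X" and "height src tgt X = enat n"
  obtains j where "j < n" and "height src tgt B = enat j"
proof -
  obtain As k j where As: "full_evol src tgt As X" "Suc k < length As" "B = As ! k"
    and heights: "height src tgt (As ! k) = enat j" "height src tgt (As ! Suc k) = enat (Suc j)"
    using assms(2) by (rule critical_ancestorsE)
  have "height src tgt (As ! Suc k) \<le> height src tgt (As ! (length As - 1))"
    using As by (intro evol_height_mono[OF assms(1)]) (auto simp: full_evol_def)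
  also have "\<dots> = height src tgt X"
    using As by (auto simp: full_evol_def last_conv_nth dest: evol_nonempty)
  finally show thesis using that heights As(3) assms(3) by simp
qed

lemma full_evol_replace_prefix:
  assumes "full_evol src tgt As X" and "k < length As" and "full_evol src tgt C (As ! k)"
  shows "full_evol src tgt (C @ drop (Suc k) As) X"
proof -
  have "C \<noteq> []" "evol src tgt (drop k As)" "hd (drop k As) = As ! k"
    using assms by (auto simp: full_evol_def evol_drop hd_drop_conv_nth dest: evol_nonempty)
  moreover have "tl (drop k As) = drop (Suc k) As" by (simp add: drop_Suc tl_drop)
  ultimately have "evol src tgt (C @ drop (Suc k) As)"
    using assms(3) evol_append[of src tgt C "drop k As"] by (simp add: full_evol_def)
  moreover have "last (C @ drop (Suc k) As) = X"
  proof (cases "Suc k < length As")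
    case True
    then have "last (C @ drop (Suc k) As) = last As" by simp
    then show ?thesis using assms(1) by (simp add: full_evol_def)
  next
    case False
    then have "k = length As - 1" "As \<noteq> []" using assms(2) by auto
    then have "As ! k = last As" by (simp add: last_conv_nth)
    then show ?thesis using assms(1,3) False by (simp add: full_evol_def)
  qed
  ultimately show ?thesis using assms(3) \<open>C \<noteq> []\<close> by (simp add: full_evol_def)
qed

lemma universal_evol_isotypic_critical_ancestor:
  assumes M: "monotonous src tgt" and U: "universal_evol src tgt U X"
    and B: "B \<in> critical_ancestors src tgt X"
    and t: "t < length U" "height src tgt (U ! t) = height src tgt B"
  shows "isotypic src tgt (U ! t) B"
proof -
  obtain As k j where As: "full_evol src tgt As X" "Suc k < length As" "B = As ! k"
    and hk: "height src tgt (As ! k) = enat j" and hSk: "height src tgt (As ! Suc k) = enat (Suc j)"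
    using B by (rule critical_ancestorsE)
  obtain C where C: "full_evol src tgt C B" "length C = Suc j"
    using full_evol_of_height hk As(3) by metis
  define Cs where "Cs = C @ drop (Suc k) As"
  have "full_evol src tgt Cs X" unfolding Cs_def using As C by (intro full_evol_replace_prefix) auto
  then have "embeds src tgt U Cs" using U by (simp add: universal_evol_def)
  then obtain s where s: "s < length Cs" and iso: "isotypic src tgt (U ! t) (Cs ! s)"
    using t(1) unfolding embeds_def by blast
  have hs: "height src tgt (Cs ! s) = enat j"
    using isotypic_height_eq[OF M iso] t(2) hk As(3) by simp
  \<comment> \<open>Before position \<open>j\<close> the heights in \<open>C\<close> are too small, after it those in the tail of \<open>As\<close> too large.\<close>
  have "s = j"
  proof (rule ccontr)
    assume "s \<noteq> j"
    then consider "s < j" | "j < s" by linarith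
    then show False
    proof cases
      case 1
      then have "height src tgt (Cs ! s) \<le> enat s"
        using height_nth_le[OF C(1), of s] C(2) by (simp add: Cs_def nth_append)
      then show False using hs 1 by simp
    next
      case 2
      then have "Cs ! s = As ! (Suc k + (s - Suc j))" "Suc k + (s - Suc j) < length As"
        using s C(2) by (auto simp: Cs_def nth_append)
      then have "height src tgt (As ! Suc k) \<le> height src tgt (Cs ! s)"
        using As by (auto intro: evol_height_mono[OF M] simp: full_evol_def)
      then show False using hs hSk by simp
    qed
  qed
  moreover have "Cs ! j = B"
    using C by (auto simp: Cs_def full_evol_def nth_append last_conv_nth dest: evol_nonempty)
  ultimately show ?thesis using iso by simp
qed

lemma height_critical_ancestors:
  assumes M: "monotonous src tgt" and "phylogenetic src tgt X" and hX: "height src tgt X = enat n"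
  shows "height src tgt ` critical_ancestors src tgt X = enat ` {..<n}"
proof
  show "height src tgt ` critical_ancestors src tgt X \<subseteq> enat ` {..<n}"
    using critical_ancestor_height_less[OF M _ hX] by blast
  obtain U where U: "full_evol src tgt U X"
    using assms(2) by (auto simp: phylogenetic_def universal_evol_def)
  show "enat ` {..<n} \<subseteq> height src tgt ` critical_ancestors src tgt X"
  proof
    fix h assume "h \<in> enat ` {..<n}"
    then obtain j where "j < n" "h = enat j" by blast
    then obtain k where k: "Suc k < length U" "height src tgt (U ! k) = enat j"
      "height src tgt (U ! Suc k) = enat (Suc j)"
      using full_evol_height_crossing[OF U hX] by metis
    then have "critical src tgt U k" by (simp add: critical_def one_enat_def less_diff_conv)
    then have "U ! k \<in> critical_ancestors src tgt X" using U by (auto simp: critical_ancestors_def)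
    then show "h \<in> height src tgt ` critical_ancestors src tgt X" using k(2) \<open>h = enat j\<close> by force
  qed
qed

lemma critical_ancestors_isotypic_iff_height:
  assumes M: "monotonous src tgt" and "phylogenetic src tgt X"
    and B: "B \<in> critical_ancestors src tgt X" and B': "B' \<in> critical_ancestors src tgt X"
  shows "isotypic src tgt B B' \<longleftrightarrow> height src tgt B = height src tgt B'"
proof
  assume "height src tgt B = height src tgt B'"
  obtain U where U: "universal_evol src tgt U X" using assms(2) by (auto simp: phylogenetic_def)
  then have FU: "full_evol src tgt U X" by (simp add: universal_evol_def)
  then obtain n where hX: "height src tgt X = enat n"
    using height_le_length by (metis enat_ile)
  obtain j where "j < n" "height src tgt B = enat j"
    using critical_ancestor_height_less[OF M B hX] by metis
  then obtain t where "Suc t < length U" "height src tgt (U ! t) = height src tgt B"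
    using full_evol_height_crossing[OF FU hX] by metis
  then have "isotypic src tgt (U ! t) B" "isotypic src tgt (U ! t) B'"
    using universal_evol_isotypic_critical_ancestor[OF M U] B B' \<open>height src tgt B = height src tgt B'\<close>
    by auto
  then show "isotypic src tgt B B'" by (blast intro: isotypic_sym isotypic_trans)
qed (rule isotypic_height_eq[OF M])

theorem corollary6p3:
  fixes src tgt :: "'e \<Rightarrow> 'v" and X :: 'v
  assumes "monotonous src tgt"
    and "phylogenetic src tgt X"
  shows "finite (isotypy_class src tgt ` critical_ancestors src tgt X) \<and>
         enat (card (isotypy_class src tgt ` critical_ancestors src tgt X)) = height src tgt X"
proof -
  obtain U where "full_evol src tgt U X"
    using assms(2) by (auto simp: phylogenetic_def universal_evol_def)
  then obtain n where hX: "height src tgt X = enat n"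
    using height_le_length by (metis enat_ile)
  let ?CA = "critical_ancestors src tgt X"
  have "bij_betw (\<lambda>c. height src tgt (inv_into ?CA (isotypy_class src tgt) c))
      (isotypy_class src tgt ` ?CA) (height src tgt ` ?CA)"
    by (intro bij_betw_images_same_kernel)
      (simp add: isotypy_class_eq_iff critical_ancestors_isotypic_iff_height[OF assms])
  moreover have "height src tgt ` ?CA = enat ` {..<n}"
    by (rule height_critical_ancestors[OF assms hX])
  ultimately have bij: "bij_betw (\<lambda>c. height src tgt (inv_into ?CA (isotypy_class src tgt) c))
      (isotypy_class src tgt ` ?CA) (enat ` {..<n})"
    by simp
  then have "card (isotypy_class src tgt ` ?CA) = card (enat ` {..<n})" by (rule bij_betw_same_card)
  then show ?thesis using bij hX by (simp add: bij_betw_finite card_image inj_on_def)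
qed

end
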